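(* Let $\sigma$ be a finite relational signature, let $\varphi=\forall x_1\exists y_1\cdots\forall x_k\exists y_k\,P(x_1,y_1,\dots,x_k,y_k)$ be a positive Horn sentence with $P$ a conjunction of atomic $\sigma$-formulas containing no equalities, and let $\psi$ be a positive Horn sentence over $\sigma$. Then $\varphi\rightarrow\psi$ is logically valid (true in every $\sigma$-structure) if and only if $\mathcal{T}_\varphi(C_\omega)\models\psi$.
   Context: Positive Horn sentences are first-order sentences built from atoms using only $\exists,\forall,\wedge$. Let $f_1,\dots,f_k$ be new function symbols, $f_i$ of arity $i$, and $\mathrm{Sk}(\varphi)=\forall x_1\cdots\forall x_k\,P(x_1,f_1(x_1),\dots,x_k,f_k(x_1,\dots,x_k))$. Let $C_\omega=\{c_1,c_2,\dots\}$ be countably many new constants and $T_\varphi(C_\omega)$ the set of closed terms built from $C_\omega$ with $f_1,\dots,f_k$. The canonical model $\mathcal{T}_\varphi(C_\omega)$ is the $\sigma$-structure with domain $T_\varphi(C_\omega)$ in which $R(t_1,\dots,t_p)$ holds iff it is obtained from an atom of the matrix of $\mathrm{Sk}(\varphi)$ by substituting terms of $T_\varphi(C_\omega)$ for $x_1,\dots,x_k$. *)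

theory Defs
  imports Main
begin

datatype 'r fm =
    Atom 'r "nat list"
  | Eq nat nat
  | Conj "'r fm" "'r fm"
  | Ex nat "'r fm"
  | All nat "'r fm"

fun wf_fm :: "('r \<Rightarrow> nat) \<Rightarrow> 'r fm \<Rightarrow> bool" where
  "wf_fm ar (Atom R vs) = (length vs = ar R)"
| "wf_fm ar (Eq i j) = True"
| "wf_fm ar (Conj a b) = (wf_fm ar a \<and> wf_fm ar b)"
| "wf_fm ar (Ex x a) = wf_fm ar a"
| "wf_fm ar (All x a) = wf_fm ar a"

fun fv :: "'r fm \<Rightarrow> nat set" where
  "fv (Atom R vs) = set vs"
| "fv (Eq i j) = {i, j}"
| "fv (Conj a b) = fv a \<union> fv b"
| "fv (Ex x a) = fv a - {x}"
| "fv (All x a) = fv a - {x}"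

definition sentence :: "'r fm \<Rightarrow> bool" where
  "sentence a \<longleftrightarrow> fv a = {}"

definition is_struct :: "('r \<Rightarrow> nat) \<Rightarrow> 'a set \<Rightarrow> ('r \<Rightarrow> 'a list \<Rightarrow> bool) \<Rightarrow> bool" where
  "is_struct ar D I \<longleftrightarrow> D \<noteq> {} \<and>
     (\<forall>R xs. I R xs \<longrightarrow> length xs = ar R \<and> set xs \<subseteq> D)"

fun sat :: "'a set \<Rightarrow> ('r \<Rightarrow> 'a list \<Rightarrow> bool) \<Rightarrow> (nat \<Rightarrow> 'a) \<Rightarrow> 'r fm \<Rightarrow> bool" where
  "sat D I e (Atom R vs) = I R (map e vs)"
| "sat D I e (Eq i j) = (e i = e j)"
| "sat D I e (Conj a b) = (sat D I e a \<and> sat D I e b)"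
| "sat D I e (Ex x a) = (\<exists>d\<in>D. sat D I (e(x := d)) a)"
| "sat D I e (All x a) = (\<forall>d\<in>D. sat D I (e(x := d)) a)"

definition models :: "'a set \<Rightarrow> ('r \<Rightarrow> 'a list \<Rightarrow> bool) \<Rightarrow> 'r fm \<Rightarrow> bool" where
  "models D I a \<longleftrightarrow> (\<forall>e. (\<forall>v. e v \<in> D) \<longrightarrow> sat D I e a)"

text \<open>Logical validity of the implication a --> b, over all structures whose
  domain is a subset of the type 'a.  (The main theorem quantifies over all
  infinite types 'a, which covers structures of every cardinality.)\<close>

definition valid_imp :: "'a itself \<Rightarrow> ('r \<Rightarrow> nat) \<Rightarrow> 'r fm \<Rightarrow> 'r fm \<Rightarrow> bool" where
  "valid_imp _ ar a b \<longleftrightarrow>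
     (\<forall>(D::'a set) I. is_struct ar D I \<longrightarrow> models D I a \<longrightarrow> models D I b)"

text \<open>Convention: x_i is the variable 2*i and y_i is the variable 2*i+1
  (for 1 <= i <= k).  The matrix P is a nonempty list of relational atoms
  (R, vs), i.e. a conjunction of atoms without equalities.\<close>

fun conjs :: "'r fm list \<Rightarrow> 'r fm" where
  "conjs [] = undefined"
| "conjs [a] = a"
| "conjs (a # b # as) = Conj a (conjs (b # as))"

fun prefix :: "nat \<Rightarrow> nat \<Rightarrow> 'r fm \<Rightarrow> 'r fm" where
  "prefix i 0 a = a"
| "prefix i (Suc n) a = All (2*i) (Ex (2*i+1) (prefix (Suc i) n a))"

definition phi_fm :: "nat \<Rightarrow> ('r \<times> nat list) list \<Rightarrow> 'r fm" where
  "phi_fm k P = prefix 1 k (conjs (map (\<lambda>(R, vs). Atom R vs) P))"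

text \<open>Closed terms built from constants c_n (n :: nat) and Skolem function
  symbols f_i (1 <= i <= k) of arity i.\<close>

datatype trm = Cst nat | Fn nat "trm list"

inductive_set closed_terms :: "nat \<Rightarrow> trm set" for k :: nat where
  cst: "Cst n \<in> closed_terms k"
| fn: "\<lbrakk>1 \<le> i; i \<le> k; length ts = i; \<forall>s\<in>set ts. s \<in> closed_terms k\<rbrakk>
        \<Longrightarrow> Fn i ts \<in> closed_terms k"

text \<open>Value of a variable of the matrix of Sk(phi) under the substitution
  x_j := t j: x_i evaluates to t i, y_i to f_i(t 1, ..., t i).\<close>

definition sk_val :: "(nat \<Rightarrow> trm) \<Rightarrow> nat \<Rightarrow> trm" where
  "sk_val t v = (if even v then t (v div 2)
                 else Fn (v div 2) (map t [1..<v div 2 + 1]))"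

definition canon_rel :: "nat \<Rightarrow> ('r \<times> nat list) list \<Rightarrow> 'r \<Rightarrow> trm list \<Rightarrow> bool" where
  "canon_rel k P R ts \<longleftrightarrow>
     (\<exists>vs t. (R, vs) \<in> set P \<and> (\<forall>j\<in>{1..k}. t j \<in> closed_terms k) \<and>
            ts = map (sk_val t) vs)"

end

theory Submission
  imports Defs "HOL-Library.Countable"
begin

text \<open>
  A structure satisfies \<open>\<phi>\<close> iff it has Skolem functions for it.  The canonical model satisfies
  \<open>\<phi>\<close> with the term constructors as Skolem functions; since it is countable it embeds into every
  infinite type, so a valid \<open>\<phi> \<longrightarrow> \<psi>\<close> forces \<open>\<psi>\<close> there.  Conversely, Skolem functions of a
  model \<open>(D, I)\<close> of \<open>\<phi>\<close> together with any valuation \<open>g\<close> of the constants turn term evaluation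
  into a homomorphism from the canonical model to \<open>(D, I)\<close>.  Positive formulas are preserved by
  homomorphisms, except for universal quantifiers; these are handled by instantiating with a fresh
  constant \<open>c\<close> and letting \<open>g c\<close> range over all of \<open>D\<close>.
\<close>

instance trm :: countable
  by countable_datatype

lemma finite_fv: "finite (fv a)"
  by (induction a) auto

lemma sat_cong: "(\<And>v. v \<in> fv a \<Longrightarrow> e v = e' v) \<Longrightarrow> sat D I e a = sat D I e' a"
proof (induction a arbitrary: e e')
  case (Atom R vs)
  then show ?case by (simp cong: map_cong)
next
  case (Conj a b)
  have "sat D I e a = sat D I e' a" "sat D I e b = sat D I e' b"
    using Conj.prems by (intro Conj.IH; auto)+
  then show ?case by simp
next
  case (Ex x a)
  then have "sat D I (e(x := d)) a = sat D I (e'(x := d)) a" for d by (intro Ex.IH) auto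
  then show ?case by simp
next
  case (All x a)
  then have "sat D I (e(x := d)) a = sat D I (e'(x := d)) a" for d by (intro All.IH) auto
  then show ?case by simp
qed auto

lemma sentence_sat_imp_models: "sentence a \<Longrightarrow> sat D I e a \<Longrightarrow> models D I a"
  unfolding models_def sentence_def using sat_cong[of a e] by (metis empty_iff)

lemma sat_conjs: "as \<noteq> [] \<Longrightarrow> sat D I e (conjs as) \<longleftrightarrow> (\<forall>a\<in>set as. sat D I e a)"
  by (induction as rule: conjs.induct) auto

definition matrix :: "('r \<times> nat list) list \<Rightarrow> 'r fm" where
  "matrix P = conjs (map (\<lambda>(R, vs). Atom R vs) P)"

lemma phi_fm_eq_prefix_matrix: "phi_fm k P = prefix 1 k (matrix P)"
  by (simp add: phi_fm_def matrix_def)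

lemma sat_matrix: "P \<noteq> [] \<Longrightarrow> sat D I e (matrix P) \<longleftrightarrow> (\<forall>(R, vs)\<in>set P. I R (map e vs))"
  unfolding matrix_def by (subst sat_conjs) auto

definition rel_image :: "('b \<Rightarrow> 'a) \<Rightarrow> ('r \<Rightarrow> 'b list \<Rightarrow> bool) \<Rightarrow> 'r \<Rightarrow> 'a list \<Rightarrow> bool" where
  "rel_image h C R xs \<longleftrightarrow> (\<exists>ts. C R ts \<and> xs = map h ts)"

lemma is_struct_rel_image: "is_struct ar T C \<Longrightarrow> is_struct ar (h ` T) (rel_image h C)"
  unfolding is_struct_def rel_image_def by fastforce

lemma rel_image_map_inj: "inj h \<Longrightarrow> rel_image h C R (map h xs) \<longleftrightarrow> C R xs"
  unfolding rel_image_def by (auto simp: inj_map_eq_map)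

lemma sat_rel_image_inj:
  assumes "inj h"
  shows "sat (h ` T) (rel_image h C) (h \<circ> e) a = sat T C e a"
proof (induction a arbitrary: e)
  case (Atom R vs)
  have "map (h \<circ> e) vs = map h (map e vs)" by simp
  then show ?case using assms by (simp only: sat.simps rel_image_map_inj)
next
  case (Eq i j)
  then show ?case using assms by (simp add: inj_eq)
next
  case (Ex x a)
  have "sat (h ` T) (rel_image h C) ((h \<circ> e)(x := h t)) a = sat T C (e(x := t)) a" for t
    using Ex.IH[of "e(x := t)"] by (simp only: fun_upd_comp)
  then show ?case unfolding sat.simps by blast
next
  case (All x a)
  have "sat (h ` T) (rel_image h C) ((h \<circ> e)(x := h t)) a = sat T C (e(x := t)) a" for t
    using All.IH[of "e(x := t)"] by (simp only: fun_upd_comp)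
  then show ?case unfolding sat.simps by blast
qed simp

lemma models_rel_image_inj:
  fixes h :: "'b \<Rightarrow> 'a"
  assumes "inj h"
  shows "models (h ` T) (rel_image h C) a \<longleftrightarrow> models T C a"
proof
  assume "models (h ` T) (rel_image h C) a"
  then show "models T C a"
    unfolding models_def using sat_rel_image_inj[OF assms] by (metis comp_apply imageI)
next
  assume T: "models T C a"
  show "models (h ` T) (rel_image h C) a"
    unfolding models_def
  proof (intro allI impI)
    fix e' :: "nat \<Rightarrow> 'a" assume e': "\<forall>v. e' v \<in> h ` T"
    then have "h \<circ> (inv_into T h \<circ> e') = e'" and "\<forall>v. (inv_into T h \<circ> e') v \<in> T"
      by (auto simp: f_inv_into_f inv_into_into)
    then show "sat (h ` T) (rel_image h C) e' a"
      using T sat_rel_image_inj[OF assms] unfolding models_def by metis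
  qed
qed

lemma ex_inj_into_infinite:
  assumes "infinite (UNIV :: 'b set)"
  shows "\<exists>h :: 'a::countable \<Rightarrow> 'b. inj h"
proof -
  obtain f :: "nat \<Rightarrow> 'b" where "inj f"
    using infinite_countable_subset[OF assms] by blast
  then have "inj (f \<circ> to_nat)" by (simp add: inj_compose)
  then show ?thesis by blast
qed

text \<open>
  A single \<open>Y :: 'a list \<Rightarrow> 'a\<close> serves as all Skolem functions at once: the length of its
  argument tells which one is meant.
\<close>

fun skolem_env :: "(nat \<Rightarrow> 'a) \<Rightarrow> nat \<Rightarrow> ('a list \<Rightarrow> 'a) \<Rightarrow> 'a list \<Rightarrow> nat \<Rightarrow> 'a" where
  "skolem_env e i Y [] = e"
| "skolem_env e i Y (x # xs) =
     skolem_env (e(2*i := x, 2*i+1 := Y [x])) (Suc i) (\<lambda>zs. Y (x # zs)) xs"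

lemma skolem_env_below: "v < 2*i \<Longrightarrow> skolem_env e i Y xs v = e v"
  by (induction xs arbitrary: e i Y) auto

lemma skolem_env_x: "j < length xs \<Longrightarrow> skolem_env e i Y xs (2*(i+j)) = xs ! j"
proof (induction xs arbitrary: e i Y j)
  case (Cons x xs)
  show ?case
  proof (cases j)
    case 0
    then show ?thesis by (simp add: skolem_env_below)
  next
    case (Suc j')
    then have "skolem_env e i Y (x # xs) (2*(i+j)) =
        skolem_env (e(2*i := x, 2*i+1 := Y [x])) (Suc i) (\<lambda>zs. Y (x # zs)) xs (2*(Suc i + j'))"
      by simp
    also have "\<dots> = xs ! j'"
      using Cons Suc by (intro Cons.IH) simp
    finally show ?thesis using Suc by simp
  qed
qed simp

lemma skolem_env_y: "j < length xs \<Longrightarrow> skolem_env e i Y xs (2*(i+j)+1) = Y (take (Suc j) xs)"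
proof (induction xs arbitrary: e i Y j)
  case (Cons x xs)
  show ?case
  proof (cases j)
    case 0
    then show ?thesis by (simp add: skolem_env_below)
  next
    case (Suc j')
    then have "skolem_env e i Y (x # xs) (2*(i+j)+1) =
        skolem_env (e(2*i := x, 2*i+1 := Y [x])) (Suc i) (\<lambda>zs. Y (x # zs)) xs (2*(Suc i + j')+1)"
      by simp
    also have "\<dots> = Y (x # take (Suc j') xs)"
      using Cons Suc by (intro Cons.IH) simp
    finally show ?thesis using Suc by simp
  qed
qed simp

lemma skolem_env_cong:
  "(\<And>zs. zs \<noteq> [] \<Longrightarrow> Y zs = Y' zs) \<Longrightarrow> skolem_env e i Y xs = skolem_env e i Y' xs"
proof (induction xs arbitrary: e i Y Y')
  case (Cons x xs)
  have "skolem_env e' (Suc i) (\<lambda>zs. Y (x # zs)) xs = skolem_env e' (Suc i) (\<lambda>zs. Y' (x # zs)) xs"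
    for e' by (rule Cons.IH) (simp add: Cons.prems)
  moreover have "Y [x] = Y' [x]" by (simp add: Cons.prems)
  ultimately show ?case by simp
qed simp

definition skolem_function ::
  "'a set \<Rightarrow> ('r \<Rightarrow> 'a list \<Rightarrow> bool) \<Rightarrow> (nat \<Rightarrow> 'a) \<Rightarrow> nat \<Rightarrow> nat \<Rightarrow> 'r fm \<Rightarrow> ('a list \<Rightarrow> 'a) \<Rightarrow> bool"
where
  "skolem_function D I e i n a Y \<longleftrightarrow>
     (\<forall>xs. set xs \<subseteq> D \<longrightarrow> xs \<noteq> [] \<longrightarrow> length xs \<le> n \<longrightarrow> Y xs \<in> D) \<and>
     (\<forall>xs. set xs \<subseteq> D \<longrightarrow> length xs = n \<longrightarrow> sat D I (skolem_env e i Y xs) a)"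

lemma skolem_function_imp_sat_prefix:
  "skolem_function D I e i n a Y \<Longrightarrow> sat D I e (prefix i n a)"
proof (induction n arbitrary: e i Y)
  case 0
  then show ?case by (simp add: skolem_function_def)
next
  case (Suc n)
  from Suc.prems
  have Y_in: "\<And>xs. set xs \<subseteq> D \<Longrightarrow> xs \<noteq> [] \<Longrightarrow> length xs \<le> Suc n \<Longrightarrow> Y xs \<in> D"
    and Y_sat: "\<And>xs. set xs \<subseteq> D \<Longrightarrow> length xs = Suc n \<Longrightarrow> sat D I (skolem_env e i Y xs) a"
    by (auto simp: skolem_function_def)
  show ?case
    unfolding prefix.simps sat.simps
  proof (intro ballI bexI)
    fix d assume "d \<in> D"
    have "skolem_function D I (e(2*i := d, 2*i+1 := Y [d])) (Suc i) n a (\<lambda>zs. Y (d # zs))"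
      unfolding skolem_function_def
    proof (intro conjI allI impI)
      fix xs assume "set xs \<subseteq> D" "xs \<noteq> []" "length xs \<le> n"
      then show "Y (d # xs) \<in> D" using \<open>d \<in> D\<close> by (intro Y_in) auto
    next
      fix xs assume "set xs \<subseteq> D" "length xs = n"
      then show "sat D I (skolem_env (e(2*i := d, 2*i+1 := Y [d])) (Suc i) (\<lambda>zs. Y (d # zs)) xs) a"
        using Y_sat[of "d # xs"] \<open>d \<in> D\<close> by simp
    qed
    then show "sat D I (e(2*i := d, 2*i+1 := Y [d])) (prefix (Suc i) n a)"
      by (rule Suc.IH)
    show "Y [d] \<in> D"
      using \<open>d \<in> D\<close> by (intro Y_in) auto
  qed
qed

lemma sat_prefix_imp_skolem_function:
  "sat D I e (prefix i n a) \<Longrightarrow> \<exists>Y. skolem_function D I e i n a Y"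
proof (induction n arbitrary: e i)
  case 0
  then show ?case by (simp add: skolem_function_def)
next
  case (Suc n)
  then have "\<forall>d\<in>D. \<exists>y. y \<in> D \<and> sat D I (e(2*i := d, 2*i+1 := y)) (prefix (Suc i) n a)"
    by auto
  from bchoice[OF this] obtain F
    where F: "\<forall>d\<in>D. F d \<in> D \<and> sat D I (e(2*i := d, 2*i+1 := F d)) (prefix (Suc i) n a)"
    by blast
  then have "\<forall>d\<in>D. \<exists>Y. skolem_function D I (e(2*i := d, 2*i+1 := F d)) (Suc i) n a Y"
    using Suc.IH by blast
  from bchoice[OF this] obtain G
    where G: "\<forall>d\<in>D. skolem_function D I (e(2*i := d, 2*i+1 := F d)) (Suc i) n a (G d)"
    by blast
  define Y where "Y xs = (if tl xs = [] then F (hd xs) else G (hd xs) (tl xs))" for xs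
  have Y_Cons: "skolem_env e' (Suc i) (\<lambda>zs. Y (d # zs)) zs = skolem_env e' (Suc i) (G d) zs"
    for e' d zs by (rule skolem_env_cong) (simp add: Y_def)
  have "skolem_function D I e i (Suc n) a Y"
    unfolding skolem_function_def
  proof (intro conjI allI impI)
    fix xs :: "'a list" assume "set xs \<subseteq> D" "xs \<noteq> []" "length xs \<le> Suc n"
    then show "Y xs \<in> D"
      using F G by (cases xs) (auto simp: Y_def skolem_function_def)
  next
    fix xs :: "'a list" assume "set xs \<subseteq> D" "length xs = Suc n"
    then show "sat D I (skolem_env e i Y xs) a"
      using G by (cases xs) (auto simp: Y_Cons skolem_function_def, simp add: Y_def)
  qed
  then show ?case by blast
qed

fun interp_trm :: "('a list \<Rightarrow> 'a) \<Rightarrow> (nat \<Rightarrow> 'a) \<Rightarrow> trm \<Rightarrow> 'a" where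
  "interp_trm Y g (Cst n) = g n"
| "interp_trm Y g (Fn i ts) = Y (map (interp_trm Y g) ts)"

fun consts_trm :: "trm \<Rightarrow> nat set" where
  "consts_trm (Cst n) = {n}"
| "consts_trm (Fn i ts) = \<Union> (consts_trm ` set ts)"

lemma finite_consts_trm: "finite (consts_trm t)"
  by (induction t) auto

lemma interp_trm_cong:
  "(\<And>n. n \<in> consts_trm t \<Longrightarrow> g n = g' n) \<Longrightarrow> interp_trm Y g t = interp_trm Y g' t"
proof (induction t)
  case (Fn i ts)
  have "map (interp_trm Y g) ts = map (interp_trm Y g') ts"
    by (rule map_cong[OF refl], rule Fn.IH) (use Fn.prems in auto)
  then show ?case by (simp only: interp_trm.simps)
qed simp

lemma interp_trm_closed:
  assumes "\<And>xs. set xs \<subseteq> D \<Longrightarrow> xs \<noteq> [] \<Longrightarrow> length xs \<le> k \<Longrightarrow> Y xs \<in> D"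
    and "range g \<subseteq> D"
  shows "t \<in> closed_terms k \<Longrightarrow> interp_trm Y g t \<in> D"
proof (induction t rule: closed_terms.induct)
  case (fn i ts)
  then show ?case by (simp, intro assms(1)) auto
qed (use assms(2) in auto)

lemma sk_val_closed:
  assumes "\<forall>j\<in>{1..k}. t j \<in> closed_terms k" "2 \<le> v" "v \<le> 2*k+1"
  shows "sk_val t v \<in> closed_terms k"
proof (cases "even v")
  case True
  then show ?thesis using assms by (auto simp: sk_val_def elim!: evenE)
next
  case False
  then obtain q where "v = 2*q+1" by (auto elim: oddE)
  then show ?thesis using assms by (auto simp: sk_val_def intro!: closed_terms.fn)
qed

text \<open>
  Stated for an abstract \<open>F\<close> so that it applies both to the identity, with
  \<open>Y xs = Fn (length xs) xs\<close>, and to \<open>interp_trm Y g\<close>.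
\<close>

lemma sk_val_eq_skolem_env:
  assumes F_Fn: "\<And>ts. F (Fn (length ts) ts) = Y (map F ts)" and "2 \<le> v" "v \<le> 2*k+1"
  shows "F (sk_val t v) = skolem_env e 1 Y (map (F \<circ> t) [1..<k+1]) v"
proof -
  define xs where "xs = map (F \<circ> t) [1..<k+1]"
  show ?thesis
  proof (cases "even v")
    case True
    then obtain m where "v = 2*m" by (auto elim: evenE)
    with assms(2,3) have m: "v = 2*(1 + (m - 1))" "m - 1 < k" "0 < m" by auto
    have "skolem_env e 1 Y xs v = xs ! (m - 1)"
      unfolding m(1) by (rule skolem_env_x) (use m in \<open>simp add: xs_def del: upt_Suc\<close>)
    also have "\<dots> = F (sk_val t v)"
      using m by (simp add: xs_def sk_val_def del: upt_Suc)
    finally show ?thesis by (simp add: xs_def)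
  next
    case False
    then obtain m where "v = 2*m + 1" by (auto elim: oddE)
    with assms(2,3) have m: "v = 2*(1 + (m - 1)) + 1" "m - 1 < k" "0 < m" by auto
    have "skolem_env e 1 Y xs v = Y (take m xs)"
      unfolding m(1) by (subst skolem_env_y) (use m in \<open>simp_all add: xs_def del: upt_Suc\<close>)
    also have "\<dots> = F (sk_val t v)"
      using F_Fn[of "map t [1..<m+1]"] \<open>v = 2*m + 1\<close> m
      by (simp add: xs_def sk_val_def take_map take_upt del: upt_Suc)
    finally show ?thesis by (simp add: xs_def)
  qed
qed

lemma is_struct_canon:
  assumes "\<forall>(R, vs) \<in> set P. length vs = ar R \<and> set vs \<subseteq> {2..2*k+1}"
  shows "is_struct ar (closed_terms k) (canon_rel k P)"
  unfolding is_struct_def canon_rel_def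
proof (intro conjI allI impI)
  show "closed_terms k \<noteq> {}" using closed_terms.cst by blast
next
  fix R ts assume "\<exists>vs t. (R, vs) \<in> set P \<and> (\<forall>j\<in>{1..k}. t j \<in> closed_terms k) \<and> ts = map (sk_val t) vs"
  then obtain vs t where R: "(R, vs) \<in> set P" and t: "\<forall>j\<in>{1..k}. t j \<in> closed_terms k"
    and ts: "ts = map (sk_val t) vs"
    by blast
  show "length ts = ar R"
    using assms R ts by auto
  show "set ts \<subseteq> closed_terms k"
    using assms R ts sk_val_closed[OF t] by fastforce
qed

lemma canon_models_phi:
  assumes "P \<noteq> []" and P_vars: "\<forall>(R, vs) \<in> set P. set vs \<subseteq> {2..2*k+1}"
  shows "models (closed_terms k) (canon_rel k P) (phi_fm k P)"
  unfolding models_def phi_fm_eq_prefix_matrix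
proof (intro allI impI)
  fix e :: "nat \<Rightarrow> trm"
  let ?Y = "\<lambda>xs. Fn (length xs) xs"
  have "skolem_function (closed_terms k) (canon_rel k P) e 1 k (matrix P) ?Y"
    unfolding skolem_function_def
  proof (intro conjI allI impI)
    fix xs :: "trm list" assume "set xs \<subseteq> closed_terms k" "xs \<noteq> []" "length xs \<le> k"
    then show "?Y xs \<in> closed_terms k" by (intro closed_terms.fn) (auto simp: Suc_le_eq)
  next
    fix xs :: "trm list" assume xs: "set xs \<subseteq> closed_terms k" "length xs = k"
    define t where "t j = xs ! (j - 1)" for j
    have t_xs: "map (id \<circ> t) [1..<k+1] = xs"
      using xs(2) by (intro nth_equalityI) (simp_all add: t_def del: upt_Suc)
    have t_closed: "\<forall>j\<in>{1..k}. t j \<in> closed_terms k"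
    proof
      fix j assume "j \<in> {1..k}"
      then have "xs ! (j - 1) \<in> set xs" using xs(2) by (intro nth_mem) auto
      then show "t j \<in> closed_terms k" using xs(1) by (auto simp: t_def)
    qed
    have "canon_rel k P R (map (skolem_env e 1 ?Y xs) vs)" if "(R, vs) \<in> set P" for R vs
    proof -
      have "set vs \<subseteq> {2..2*k+1}" using P_vars that by auto
      then have "sk_val t v = skolem_env e 1 ?Y xs v" if "v \<in> set vs" for v
        using sk_val_eq_skolem_env[where F = id and Y = ?Y, of v k t e, unfolded t_xs] that
        by auto
      then have "map (skolem_env e 1 ?Y xs) vs = map (sk_val t) vs" by simp
      then show ?thesis
        unfolding canon_rel_def using that t_closed by blast
    qed
    then show "sat (closed_terms k) (canon_rel k P) (skolem_env e 1 ?Y xs) (matrix P)"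
      unfolding sat_matrix[OF assms(1)] by blast
  qed
  then show "sat (closed_terms k) (canon_rel k P) e (prefix 1 k (matrix P))"
    by (rule skolem_function_imp_sat_prefix)
qed

lemma interp_trm_canon_rel:
  assumes "P \<noteq> []" and P_vars: "\<forall>(R, vs) \<in> set P. set vs \<subseteq> {2..2*k+1}"
    and Y: "skolem_function D I e 1 k (matrix P) Y" and g: "range g \<subseteq> D"
    and "canon_rel k P R ts"
  shows "I R (map (interp_trm Y g) ts)"
proof -
  obtain vs t where R: "(R, vs) \<in> set P" and t: "\<forall>j\<in>{1..k}. t j \<in> closed_terms k"
    and ts: "ts = map (sk_val t) vs"
    using assms(5) by (auto simp: canon_rel_def)
  define xs where "xs = map (interp_trm Y g \<circ> t) [1..<k+1]"
  have Y_in: "\<And>xs. set xs \<subseteq> D \<Longrightarrow> xs \<noteq> [] \<Longrightarrow> length xs \<le> k \<Longrightarrow> Y xs \<in> D"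
    and Y_sat: "\<And>xs. set xs \<subseteq> D \<Longrightarrow> length xs = k \<Longrightarrow> sat D I (skolem_env e 1 Y xs) (matrix P)"
    using Y by (auto simp: skolem_function_def)
  have "set xs \<subseteq> D"
    using interp_trm_closed[OF Y_in g] t by (auto simp: xs_def)
  then have "sat D I (skolem_env e 1 Y xs) (matrix P)"
    by (rule Y_sat) (simp add: xs_def)
  then have "I R (map (skolem_env e 1 Y xs) vs)"
    unfolding sat_matrix[OF assms(1)] using R by blast
  moreover have "set vs \<subseteq> {2..2*k+1}" using P_vars R by auto
  then have "interp_trm Y g (sk_val t v) = skolem_env e 1 Y xs v" if "v \<in> set vs" for v
    unfolding xs_def using that by (intro sk_val_eq_skolem_env) auto
  then have "map (interp_trm Y g) ts = map (skolem_env e 1 Y xs) vs"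
    by (simp add: ts)
  ultimately show ?thesis by simp
qed

lemma sat_interp_trm:
  assumes Y_in: "\<And>xs. set xs \<subseteq> D \<Longrightarrow> xs \<noteq> [] \<Longrightarrow> length xs \<le> k \<Longrightarrow> Y xs \<in> D"
    and hom: "\<And>g R ts. range g \<subseteq> D \<Longrightarrow> C R ts \<Longrightarrow> I R (map (interp_trm Y g) ts)"
  shows "range e \<subseteq> closed_terms k \<Longrightarrow> range g \<subseteq> D \<Longrightarrow> sat (closed_terms k) C e a \<Longrightarrow>
    sat D I (interp_trm Y g \<circ> e) a"
proof (induction a arbitrary: e g)
  case (Atom R vs)
  then show ?case using hom[of g R "map e vs"] by (simp add: comp_def)
next
  case (Ex x a)
  then obtain t where t: "t \<in> closed_terms k" "sat (closed_terms k) C (e(x := t)) a"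
    by auto
  moreover have "range (e(x := t)) \<subseteq> closed_terms k"
    using Ex.prems(1) t(1) by auto
  ultimately have "sat D I (interp_trm Y g \<circ> e(x := t)) a"
    using Ex.IH Ex.prems(2) by blast
  moreover have "interp_trm Y g t \<in> D"
    using interp_trm_closed[OF Y_in Ex.prems(2) t(1)] .
  ultimately show ?case
    unfolding fun_upd_comp sat.simps by blast
next
  case (All x a)
  show ?case
    unfolding sat.simps
  proof
    fix d assume "d \<in> D"
    have "finite (\<Union> (consts_trm ` e ` fv a))"
      using finite_fv finite_consts_trm by blast
    then obtain c where c: "c \<notin> \<Union> (consts_trm ` e ` fv a)"
      using ex_new_if_finite[OF infinite_UNIV_nat] by blast
    have "sat (closed_terms k) C (e(x := Cst c)) a"
      using All.prems(3) closed_terms.cst by simp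
    moreover have "range (e(x := Cst c)) \<subseteq> closed_terms k"
      using All.prems(1) closed_terms.cst by auto
    moreover have "range (g(c := d)) \<subseteq> D"
      using All.prems(2) \<open>d \<in> D\<close> by auto
    ultimately have "sat D I (interp_trm Y (g(c := d)) \<circ> e(x := Cst c)) a"
      using All.IH by blast
    moreover have "(interp_trm Y (g(c := d)) \<circ> e(x := Cst c)) v = ((interp_trm Y g \<circ> e)(x := d)) v"
      if "v \<in> fv a" for v
    proof (cases "v = x")
      case False
      have "c \<notin> consts_trm (e v)" using c that by blast
      then have "interp_trm Y (g(c := d)) (e v) = interp_trm Y g (e v)"
        by (intro interp_trm_cong) auto
      then show ?thesis using False by simp
    qed simp
    ultimately show "sat D I ((interp_trm Y g \<circ> e)(x := d)) a"
      using sat_cong[of a] by blast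
  qed
qed auto

lemma models_canon_imp_models:
  assumes "P \<noteq> []" and P_vars: "\<forall>(R, vs) \<in> set P. set vs \<subseteq> {2..2*k+1}"
    and "sentence \<psi>" and "D \<noteq> {}" and "models D I (phi_fm k P)"
    and "models (closed_terms k) (canon_rel k P) \<psi>"
  shows "models D I \<psi>"
proof -
  obtain d where "d \<in> D" using assms(4) by blast
  then have "sat D I (\<lambda>_. d) (prefix 1 k (matrix P))"
    using assms(5) by (simp add: models_def phi_fm_eq_prefix_matrix)
  then obtain Y where Y: "skolem_function D I (\<lambda>_. d) 1 k (matrix P) Y"
    using sat_prefix_imp_skolem_function by blast
  have "sat (closed_terms k) (canon_rel k P) (\<lambda>_. Cst 0) \<psi>"
    using assms(6) closed_terms.cst by (simp add: models_def)
  then have "sat D I (interp_trm Y (\<lambda>_. d) \<circ> (\<lambda>_. Cst 0)) \<psi>"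
    using Y \<open>d \<in> D\<close> interp_trm_canon_rel[OF assms(1) P_vars Y]
    by (intro sat_interp_trm[where k = k and C = "canon_rel k P"])
      (auto simp: skolem_function_def intro: closed_terms.cst)
  with assms(3) show ?thesis
    by (rule sentence_sat_imp_models)
qed

lemma valid_imp_imp_canon_models:
  assumes "P \<noteq> []" and P_wf: "\<forall>(R, vs) \<in> set P. length vs = ar R \<and> set vs \<subseteq> {2..2*k+1}"
    and "infinite (UNIV :: 'a set)" and valid: "valid_imp TYPE('a) ar (phi_fm k P) \<psi>"
  shows "models (closed_terms k) (canon_rel k P) \<psi>"
proof -
  obtain h :: "trm \<Rightarrow> 'a" where "inj h"
    using ex_inj_into_infinite[OF assms(3)] by blast
  have P_vars: "\<forall>(R, vs) \<in> set P. set vs \<subseteq> {2..2*k+1}"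
    using P_wf by auto
  have "is_struct ar (h ` closed_terms k) (rel_image h (canon_rel k P))"
    using is_struct_canon[OF P_wf] by (rule is_struct_rel_image)
  moreover have "models (h ` closed_terms k) (rel_image h (canon_rel k P)) (phi_fm k P)"
    unfolding models_rel_image_inj[OF \<open>inj h\<close>] using assms(1) P_vars by (rule canon_models_phi)
  ultimately have "models (h ` closed_terms k) (rel_image h (canon_rel k P)) \<psi>"
    by (rule valid[unfolded valid_imp_def, rule_format])
  then show ?thesis
    unfolding models_rel_image_inj[OF \<open>inj h\<close>] .
qed

theorem mainTheorem10:
  fixes ar :: "'r::finite \<Rightarrow> nat"
    and k :: nat
    and P :: "('r \<times> nat list) list"
    and \<psi> :: "'r fm"
  assumes "P \<noteq> []"
    and "\<forall>(R, vs) \<in> set P. length vs = ar R \<and> set vs \<subseteq> {2..2*k+1}"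
    and "wf_fm ar \<psi>"
    and "sentence \<psi>"
    and "infinite (UNIV :: 'a set)"
  shows "valid_imp TYPE('a) ar (phi_fm k P) \<psi> \<longleftrightarrow>
         models (closed_terms k) (canon_rel k P) \<psi>"
proof
  have P_vars: "\<forall>(R, vs) \<in> set P. set vs \<subseteq> {2..2*k+1}"
    using assms(2) by auto
  show "models (closed_terms k) (canon_rel k P) \<psi>" if "valid_imp TYPE('a) ar (phi_fm k P) \<psi>"
    using assms(1,2,5) that by (rule valid_imp_imp_canon_models)
  show "valid_imp TYPE('a) ar (phi_fm k P) \<psi>" if "models (closed_terms k) (canon_rel k P) \<psi>"
    unfolding valid_imp_def
  proof (intro allI impI)
    fix D :: "'a set" and I assume "is_struct ar D I" and phi: "models D I (phi_fm k P)"
    then have "D \<noteq> {}" by (simp add: is_struct_def)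
    with assms(1) P_vars assms(4) show "models D I \<psi>"
      using phi that by (rule models_canon_imp_models)
  qed
qed

end
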